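(* Let $\mathfrak L=\mathbb V\oplus\mathbb W$ be a color gLt-algebra admitting a quasi-multiplicative basis $\mathfrak B=\{e_i\}_{i\in I}$ of $\mathbb W\neq 0$, and let $\mu$ be the associated map defined in the context. Let $i,j\in I$ and $X\in\mathfrak I^{\,n-1}\,\dot\cup\,\overline{\mathfrak I}^{\,n-1}$. Then $i\in\mu(j,X)$ if and only if $j\in\mu(i,\overline X)$.
   Context: Let $\mathbb F$ be a field, $\mathbb G$ an abelian group, $n\ge 2$, and $\epsilon:\mathbb G\times\mathbb G\to\mathbb F\setminus\{0\}$ a bicharacter ($\epsilon(k,g+h)=\epsilon(k,g)\epsilon(k,h)$, $\epsilon(g+h,k)=\epsilon(g,k)\epsilon(h,k)$, $\epsilon(g,h)\epsilon(h,g)=1$). A graded $n$-ary algebra is a $\mathbb G$-graded vector space $\mathfrak L=\bigoplus_{g\in\mathbb G}\mathfrak L_g$ with an $n$-linear map $\langle\cdot,\dots,\cdot\rangle:\mathfrak L^n\to\mathfrak L$ such that $\langle\mathfrak L_{g_1},\dots,\mathfrak L_{g_n}\rangle\subset\mathfrak L_{g_1+\dots+g_n}$. For $\sigma\in\mathbb S_n$ write $\langle x_1,\dots,x_n\rangle_\sigma:=\langle x_{\sigma(1)},\dots,x_{\sigma(n)}\rangle$; for subsets $A_1,\dots,A_n$, $\langle A_1,\dots,A_n\rangle_\sigma$ denotes the linear span of all $\langle x_1,\dots,x_n\rangle_\sigma$ with $x_r\in A_r$. A color gLt-algebra is a graded $n$-ary algebra satisfying, for each $k=1,\dots,n$ and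 fixed scalars $\alpha^{\sigma_1,\sigma_2}_{i,j,k}\in\mathbb F$, the color version (each term on the right multiplied by the product of values of $\epsilon$ on the degrees of the homogeneous arguments transposed in passing from the left-hand order to the order of that term) of the identity $\langle y_1,\dots,y_{k-1},\langle x_1,\dots,x_n\rangle,y_k,\dots,y_{n-1}\rangle=\sum_{1\le i,j\le n,\,\sigma_1\in\mathbb S_n,\,\sigma_2\in\mathbb S_{n-1}}\alpha^{\sigma_1,\sigma_2}_{i,j,k}\langle x_{\sigma_1(1)},\dots,x_{\sigma_1(i-1)},\langle y_{\sigma_2(1)},\dots,y_{\sigma_2(j-1)},x_{\sigma_1(i)},y_{\sigma_2(j)},\dots,y_{\sigma_2(n-1)}\rangle,x_{\sigma_1(i+1)},\dots,x_{\sigma_1(n)}\rangle$. $\mathfrak L$ admits a quasi-multiplicative basis if $\mathfrak L=\mathbb V\oplus\mathbb W$ with $\mathbb V$, $\mathbb W\ne0$ graded subspaces and $\mathfrak B=\{e_i\}_{i\in I}$ a basis of homogeneous elements of $\mathbb W$ such that: (1) for $i_1,\dots,i_n\in I$, either $\langle e_{i_1},\dots,e_{i_n}\rangle\in\mathbb Fe_j$ for some $j\in I$ or $\langle e_{i_1},\dots,e_{i_n}\rangle\in\mathbb V$; (2) for $0<k<n$, $i_1,\dots,i_k\in I$ and $\sigma\in\mathbb S_n$, $\langle e_{i_1},\dots,e_{i_k},\mathbb V,\dots,\mathbb V\rangle_\sigma\subset\mathbb Fe_{j_\sigma}$ for some $j_\sigma\in I$; (3) either $\langle\mathbb V,\dots,\mathbb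 V\rangle\subset\mathbb Fe_j$ for some $j\in I$ or $\langle\mathbb V,\dots,\mathbb V\rangle\subset\mathbb V$. Index maps: let $v$ be a symbol not in $I$, $\mathfrak I:=I\,\dot\cup\,\{v\}$; for each $j\in\mathfrak I$ take a new symbol $\overline j$, $\overline I:=\{\overline i:i\in I\}$, $\overline{\mathfrak I}:=\overline I\,\dot\cup\,\{\overline v\}$; set $\overline{(\overline j)}:=j$, $\overline J:=\{\overline j:j\in J\}$ for a set $J$ of symbols, and $\overline X:=(\overline a_2,\dots,\overline a_n)$ for a tuple $X=(a_2,\dots,a_n)$. Put $u_j:=e_j$ for $j\in I$ and $u_v:=\mathbb V$. For $\sigma\in\mathbb S_n$ and $(j_1,\dots,j_n)\in\mathfrak I^n$ let $a_\sigma(j_1,\dots,j_n)=\{r\}$ if $r\in I$ and $0\ne\langle u_{j_1},\dots,u_{j_n}\rangle_\sigma\subset\mathbb Fe_r$, $=\{v\}$ if $0\ne\langle u_{j_1},\dots,u_{j_n}\rangle_\sigma\subset\mathbb V$, and $=\emptyset$ otherwise. For $j,j_2,\dots,j_n\in\mathfrak I$ let $b_\sigma(j,\overline j_2,\dots,\overline j_n):=\{x\in\mathfrak I: a_\sigma(x,j_2,\dots,j_n)=\{j\}\}$. Define $\mu$ on $(\mathfrak I\,\dot\cup\,\overline{\mathfrak I})\times(\mathfrak I^{n-1}\,\dot\cup\,\overline{\mathfrak I}^{n-1})$ with values subsets of $\mathfrak I$ by: $\mu(j,j_1,\dots,j_{n-1})=\bigcup_{\sigma\in\mathbb S_n}a_\sigma(j,j_1,\dots,j_{n-1})$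 for $j,j_1,\dots,j_{n-1}\in\mathfrak I$; $\mu(j,\overline j_1,\dots,\overline j_{n-1})=\bigcup_{\sigma\in\mathbb S_n}b_\sigma(j,\overline j_1,\dots,\overline j_{n-1})$ for $j,j_1,\dots,j_{n-1}\in\mathfrak I$; $\mu(\overline j,j_1,\dots,j_{n-1})=\bigcup_{1\le k\le n-1,\ \sigma\in\mathbb S_n}b_\sigma(j_k,\overline j,\overline j_1,\dots,\overline j_{k-1},\overline j_{k+1},\dots,\overline j_{n-1})$ for $j,j_1,\dots,j_{n-1}\in\mathfrak I$; and $\mu(\overline j,\overline j_1,\dots,\overline j_{n-1})=\emptyset$. *)

theory Defs
  imports Complex_Main "HOL-Combinatorics.Permutations"
begin

text \<open>All indices are 0-based.\<close>

definition graded_vs :: "('f::field \<Rightarrow> 'v::ab_group_add \<Rightarrow> 'v) \<Rightarrow> ('g \<Rightarrow> 'v set) \<Rightarrow> bool" where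
  "graded_vs scale Lg \<longleftrightarrow>
     vector_space scale \<and>
     (\<forall>g. Modules.module.subspace scale (Lg g)) \<and>
     Modules.module.span scale (\<Union>g. Lg g) = UNIV \<and>
     (\<forall>S x. finite S \<and> (\<forall>g\<in>S. x g \<in> Lg g) \<and> sum x S = 0 \<longrightarrow> (\<forall>g\<in>S. x g = 0))"

definition graded_subspace :: "('f::field \<Rightarrow> 'v::ab_group_add \<Rightarrow> 'v) \<Rightarrow> ('g \<Rightarrow> 'v set) \<Rightarrow> 'v set \<Rightarrow> bool" where
  "graded_subspace scale Lg U \<longleftrightarrow>
     Modules.module.subspace scale U \<and> U = Modules.module.span scale (\<Union>g. U \<inter> Lg g)"

definition bicharacter :: "('g::ab_group_add \<Rightarrow> 'g \<Rightarrow> 'f::field) \<Rightarrow> bool" where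
  "bicharacter eps \<longleftrightarrow>
     (\<forall>g h. eps g h \<noteq> 0) \<and>
     (\<forall>k g h. eps k (g + h) = eps k g * eps k h) \<and>
     (\<forall>k g h. eps (g + h) k = eps g k * eps h k) \<and>
     (\<forall>g h. eps g h * eps h g = 1)"

definition graded_nary_algebra ::
  "('f::field \<Rightarrow> 'v::ab_group_add \<Rightarrow> 'v) \<Rightarrow> ('g::ab_group_add \<Rightarrow> 'v set) \<Rightarrow> nat \<Rightarrow> ('v list \<Rightarrow> 'v) \<Rightarrow> bool" where
  "graded_nary_algebra scale Lg n nmul \<longleftrightarrow>
     graded_vs scale Lg \<and> 2 \<le> n \<and>
     (\<comment> \<open>n-linearity\<close>
      \<forall>xs k a y z. length xs = n \<and> k < n \<longrightarrow>
        nmul (xs[k := scale a y + z]) = scale a (nmul (xs[k := y])) + nmul (xs[k := z])) \<and>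
     (\<comment> \<open>compatibility with the grading\<close>
      \<forall>xs ds. length xs = n \<and> length ds = n \<and> (\<forall>r<n. xs ! r \<in> Lg (ds ! r))
        \<longrightarrow> nmul xs \<in> Lg (sum_list ds))"

definition before :: "'a list \<Rightarrow> 'a \<Rightarrow> 'a \<Rightarrow> bool" where
  "before l a b \<longleftrightarrow> (\<exists>p q. p < q \<and> q < length l \<and> l ! p = a \<and> l ! q = b)"

definition color_sign :: "('g \<Rightarrow> 'g \<Rightarrow> 'f::field) \<Rightarrow> ('a \<Rightarrow> 'g) \<Rightarrow> 'a list \<Rightarrow> 'a list \<Rightarrow> 'f" where
  "color_sign eps deg L R =
     (\<Prod>(a, b) \<in> {(a, b). before L a b \<and> before R b a}. eps (deg a) (deg b))"

text \<open>Labels: Inl r stands for x_r (r < n), Inr s for y_s (s < n - 1).\<close>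
definition lhs_labels :: "nat \<Rightarrow> nat \<Rightarrow> (nat + nat) list" where
  "lhs_labels n k = map Inr [0..<k] @ map Inl [0..<n] @ map Inr [k..<n - 1]"

definition rhs_labels :: "nat \<Rightarrow> nat \<Rightarrow> nat \<Rightarrow> (nat \<Rightarrow> nat) \<Rightarrow> (nat \<Rightarrow> nat) \<Rightarrow> (nat + nat) list" where
  "rhs_labels n i j \<sigma>1 \<sigma>2 =
     map (Inl \<circ> \<sigma>1) [0..<i] @ map (Inr \<circ> \<sigma>2) [0..<j] @ [Inl (\<sigma>1 i)] @
     map (Inr \<circ> \<sigma>2) [j..<n - 1] @ map (Inl \<circ> \<sigma>1) [i + 1..<n]"

definition perm_list :: "nat \<Rightarrow> (nat \<Rightarrow> nat) \<Rightarrow> 'a list \<Rightarrow> 'a list" where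
  "perm_list m \<sigma> xs = map (\<lambda>r. xs ! \<sigma> r) [0..<m]"

text \<open>alpha i j k sigma1 sigma2 are the fixed scalars (0-based: i, j, k < n).  k is the
  position of the inner product on the left-hand side (preceded by y_0..y_(k-1)); j is the
  position of the x-argument inside the inner product on the right.\<close>
definition color_gLt_algebra ::
  "('f::field \<Rightarrow> 'v::ab_group_add \<Rightarrow> 'v) \<Rightarrow> ('g::ab_group_add \<Rightarrow> 'v set) \<Rightarrow> ('g \<Rightarrow> 'g \<Rightarrow> 'f)
    \<Rightarrow> nat \<Rightarrow> ('v list \<Rightarrow> 'v)
    \<Rightarrow> (nat \<Rightarrow> nat \<Rightarrow> nat \<Rightarrow> (nat \<Rightarrow> nat) \<Rightarrow> (nat \<Rightarrow> nat) \<Rightarrow> 'f) \<Rightarrow> bool" where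
  "color_gLt_algebra scale Lg eps n nmul alpha \<longleftrightarrow>
     graded_nary_algebra scale Lg n nmul \<and> bicharacter eps \<and>
     (\<forall>k xs ys dxs dys. k < n \<and> length xs = n \<and> length ys = n - 1 \<and>
        length dxs = n \<and> length dys = n - 1 \<and>
        (\<forall>r<n. xs ! r \<in> Lg (dxs ! r)) \<and> (\<forall>s<n - 1. ys ! s \<in> Lg (dys ! s)) \<longrightarrow>
        nmul (take k ys @ [nmul xs] @ drop k ys) =
          (\<Sum>i<n. \<Sum>j<n. \<Sum>\<sigma>1\<in>{\<sigma>. \<sigma> permutes {..<n}}. \<Sum>\<sigma>2\<in>{\<sigma>. \<sigma> permutes {..<n - 1}}.
            scale (alpha i j k \<sigma>1 \<sigma>2 *
                   color_sign eps (case_sum (\<lambda>r. dxs ! r) (\<lambda>s. dys ! s))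
                     (lhs_labels n k) (rhs_labels n i j \<sigma>1 \<sigma>2))
              (let xp = perm_list n \<sigma>1 xs; yp = perm_list (n - 1) \<sigma>2 ys in
               nmul (take i xp @ [nmul (take j yp @ [xp ! i] @ drop j yp)] @ drop (i + 1) xp))))"

definition brk :: "('f::field \<Rightarrow> 'v::ab_group_add \<Rightarrow> 'v) \<Rightarrow> nat \<Rightarrow> ('v list \<Rightarrow> 'v)
    \<Rightarrow> 'v set list \<Rightarrow> (nat \<Rightarrow> nat) \<Rightarrow> 'v set" where
  "brk scale n nmul As \<sigma> =
     Modules.module.span scale {nmul (perm_list n \<sigma> xs) | xs. length xs = n \<and> (\<forall>r<n. xs ! r \<in> As ! r)}"

definition Fline :: "('f::field \<Rightarrow> 'v::ab_group_add \<Rightarrow> 'v) \<Rightarrow> 'v \<Rightarrow> 'v set" where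
  "Fline scale x = range (\<lambda>c. scale c x)"

definition quasi_mult_basis ::
  "('f::field \<Rightarrow> 'v::ab_group_add \<Rightarrow> 'v) \<Rightarrow> ('g \<Rightarrow> 'v set) \<Rightarrow> nat \<Rightarrow> ('v list \<Rightarrow> 'v)
    \<Rightarrow> 'v set \<Rightarrow> 'v set \<Rightarrow> 'i set \<Rightarrow> ('i \<Rightarrow> 'v) \<Rightarrow> bool" where
  "quasi_mult_basis scale Lg n nmul V W I e \<longleftrightarrow>
     graded_subspace scale Lg V \<and> graded_subspace scale Lg W \<and>
     V \<noteq> {0} \<and> W \<noteq> {0} \<and> V \<inter> W = {0} \<and> (\<forall>x. \<exists>a\<in>V. \<exists>b\<in>W. x = a + b) \<and>
     \<comment> \<open>{e_i} is a basis of W consisting of homogeneous elements\<close>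
     inj_on e I \<and> \<not> Modules.module.dependent scale (e ` I) \<and> Modules.module.span scale (e ` I) = W \<and>
     (\<forall>i\<in>I. \<exists>g. e i \<in> Lg g) \<and>
     \<comment> \<open>condition (1)\<close>
     (\<forall>is. length is = n \<and> set is \<subseteq> I \<longrightarrow>
        (\<exists>j\<in>I. nmul (map e is) \<in> Fline scale (e j)) \<or> nmul (map e is) \<in> V) \<and>
     \<comment> \<open>condition (2)\<close>
     (\<forall>k is \<sigma>. 0 < k \<and> k < n \<and> length is = k \<and> set is \<subseteq> I \<and> \<sigma> permutes {..<n} \<longrightarrow>
        (\<exists>j\<in>I. brk scale n nmul (map (\<lambda>i. {e i}) is @ replicate (n - k) V) \<sigma>
                 \<subseteq> Fline scale (e j))) \<and>
     \<comment> \<open>condition (3)\<close>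
     ((\<exists>j\<in>I. brk scale n nmul (replicate n V) id \<subseteq> Fline scale (e j)) \<or>
      brk scale n nmul (replicate n V) id \<subseteq> V)"

text \<open>The symbol v is None, i in I is Some i; so frak I = Jset I.  Barred symbols and barred
  tuples are tagged by the constructor Bar.\<close>
datatype 'a barred = Unb 'a | Bar 'a

fun flip_bar :: "'a barred \<Rightarrow> 'a barred" where
  "flip_bar (Unb a) = Bar a"
| "flip_bar (Bar a) = Unb a"

definition Jset :: "'i set \<Rightarrow> 'i option set" where
  "Jset I = insert None (Some ` I)"

fun uset :: "('i \<Rightarrow> 'v) \<Rightarrow> 'v set \<Rightarrow> 'i option \<Rightarrow> 'v set" where
  "uset e V None = V"
| "uset e V (Some i) = {e i}"

definition a_sig :: "('f::field \<Rightarrow> 'v::ab_group_add \<Rightarrow> 'v) \<Rightarrow> nat \<Rightarrow> ('v list \<Rightarrow> 'v)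
    \<Rightarrow> 'v set \<Rightarrow> 'i set \<Rightarrow> ('i \<Rightarrow> 'v) \<Rightarrow> (nat \<Rightarrow> nat) \<Rightarrow> 'i option list \<Rightarrow> 'i option set" where
  "a_sig scale n nmul V I e \<sigma> js =
     (let S = brk scale n nmul (map (uset e V) js) \<sigma> in
       {Some r | r. r \<in> I \<and> S \<noteq> {0} \<and> S \<subseteq> Fline scale (e r)} \<union>
       (if S \<noteq> {0} \<and> S \<subseteq> V then {None} else {}))"

definition b_sig :: "('f::field \<Rightarrow> 'v::ab_group_add \<Rightarrow> 'v) \<Rightarrow> nat \<Rightarrow> ('v list \<Rightarrow> 'v)
    \<Rightarrow> 'v set \<Rightarrow> 'i set \<Rightarrow> ('i \<Rightarrow> 'v) \<Rightarrow> (nat \<Rightarrow> nat) \<Rightarrow> 'i option \<Rightarrow> 'i option list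
    \<Rightarrow> 'i option set" where
  "b_sig scale n nmul V I e \<sigma> j js = {x \<in> Jset I. a_sig scale n nmul V I e \<sigma> (x # js) = {j}}"

fun mu :: "('f::field \<Rightarrow> 'v::ab_group_add \<Rightarrow> 'v) \<Rightarrow> nat \<Rightarrow> ('v list \<Rightarrow> 'v)
    \<Rightarrow> 'v set \<Rightarrow> 'i set \<Rightarrow> ('i \<Rightarrow> 'v) \<Rightarrow> 'i option barred \<Rightarrow> 'i option list barred
    \<Rightarrow> 'i option set" where
  "mu scale n nmul V I e (Unb j) (Unb js) =
     (\<Union>\<sigma>\<in>{\<sigma>. \<sigma> permutes {..<n}}. a_sig scale n nmul V I e \<sigma> (j # js))"
| "mu scale n nmul V I e (Unb j) (Bar js) =
     (\<Union>\<sigma>\<in>{\<sigma>. \<sigma> permutes {..<n}}. b_sig scale n nmul V I e \<sigma> j js)"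
| "mu scale n nmul V I e (Bar j) (Unb js) =
     (\<Union>k<n - 1. \<Union>\<sigma>\<in>{\<sigma>. \<sigma> permutes {..<n}}.
        b_sig scale n nmul V I e \<sigma> (js ! k) (j # take k js @ drop (k + 1) js))"
| "mu scale n nmul V I e (Bar j) (Bar js) = {}"

end

theory Submission
  imports Defs
begin

text \<open>The sets a_sigma are subsingletons: a nonzero subspace lies in at most one line
  through a basis vector, since the basis is linearly independent, and never in both such a
  line and V, since V meets W only in 0.  Hence x \<in> b_sigma(j, X) means exactly
  j \<in> a_sigma(x, X), and both sides of the equivalence unfold to the same union over sigma.\<close>

context vector_space
begin

lemma Fline_basis_inj:
  assumes "inj_on e I" and "independent (e ` I)"
    and "r \<in> I" and "r' \<in> I"
    and "x \<noteq> 0" and "x \<in> Fline scale (e r)" and "x \<in> Fline scale (e r')"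
  shows "r = r'"
proof (rule ccontr)
  assume ne: "r \<noteq> r'"
  obtain c d where c: "x = scale c (e r)" and d: "x = scale d (e r')"
    using assms(6,7) unfolding Fline_def by blast
  have "c \<noteq> 0" using c \<open>x \<noteq> 0\<close> by auto
  then have "e r = scale (inverse c) x" using c by simp
  also have "\<dots> = scale (inverse c * d) (e r')" using d by simp
  finally have "e r = scale (inverse c * d) (e r')" .
  moreover have "e r' \<in> e ` I - {e r}" using ne assms(1,3,4) by (auto dest: inj_onD)
  ultimately have "e r \<in> span (e ` I - {e r})" by (metis span_base span_scale)
  then show False using assms(2,3) unfolding dependent_def by blast
qed

lemma Fline_inter_eq_zero:
  assumes "subspace W" and "w \<in> W" and "V \<inter> W = {0}"
    and "x \<in> Fline scale w" and "x \<in> V"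
  shows "x = 0"
  using assms unfolding Fline_def by (auto intro: subspace_scale)

end

lemma a_sig_subsingleton:
  assumes "vector_space scale" and "quasi_mult_basis scale Lg n nmul V W I e"
    and "a \<in> a_sig scale n nmul V I e \<sigma> js" and "b \<in> a_sig scale n nmul V I e \<sigma> js"
  shows "a = b"
proof -
  interpret vector_space scale by fact
  define S where "S = brk scale n nmul (map (uset e V) js) \<sigma>"
  have a_sig_S: "a_sig scale n nmul V I e \<sigma> js =
      {Some r | r. r \<in> I \<and> S \<noteq> {0} \<and> S \<subseteq> Fline scale (e r)} \<union>
      (if S \<noteq> {0} \<and> S \<subseteq> V then {None} else {})"
    unfolding a_sig_def S_def Let_def ..
  have basis: "inj_on e I" "independent (e ` I)" "span (e ` I) = W" "V \<inter> W = {0}"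
    using assms(2) unfolding quasi_mult_basis_def by blast+
  have "0 \<in> S" unfolding S_def brk_def by (rule span_zero)
  moreover have "S \<noteq> {0}" using assms(3) unfolding a_sig_S by (auto split: if_splits)
  ultimately obtain x where x: "x \<in> S" "x \<noteq> 0" by blast
  have not_V: False if "S \<subseteq> V" "S \<subseteq> Fline scale (e r)" "r \<in> I" for r
    using Fline_inter_eq_zero[of W "e r" V x] basis(3,4) that x
    by (metis span_base subspace_span image_eqI subsetD)
  have "a = Some r \<Longrightarrow> b = Some r' \<Longrightarrow> r \<in> I \<Longrightarrow> r' \<in> I \<Longrightarrow>
      S \<subseteq> Fline scale (e r) \<Longrightarrow> S \<subseteq> Fline scale (e r') \<Longrightarrow> a = b" for r r'
    using Fline_basis_inj[OF basis(1,2), of r r' x] x by blast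
  then show "a = b"
    using assms(3,4) not_V unfolding a_sig_S by (auto split: if_splits)
qed

lemma mem_b_sig_iff:
  assumes "vector_space scale" and "quasi_mult_basis scale Lg n nmul V W I e"
    and "x \<in> Jset I"
  shows "x \<in> b_sig scale n nmul V I e \<sigma> y js \<longleftrightarrow> y \<in> a_sig scale n nmul V I e \<sigma> (x # js)"
  using a_sig_subsingleton[OF assms(1,2)] assms(3) unfolding b_sig_def by blast

theorem lemma3p1:
  fixes scale :: "'f::field \<Rightarrow> 'v::ab_group_add \<Rightarrow> 'v"
    and Lg :: "'g::ab_group_add \<Rightarrow> 'v set"
    and eps :: "'g \<Rightarrow> 'g \<Rightarrow> 'f"
    and n :: nat
    and nmul :: "'v list \<Rightarrow> 'v"
    and alpha :: "nat \<Rightarrow> nat \<Rightarrow> nat \<Rightarrow> (nat \<Rightarrow> nat) \<Rightarrow> (nat \<Rightarrow> nat) \<Rightarrow> 'f"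
    and V W :: "'v set"
    and I :: "'i set"
    and e :: "'i \<Rightarrow> 'v"
    and i j :: 'i
    and X :: "'i option list barred"
  assumes "color_gLt_algebra scale Lg eps n nmul alpha"
    and "quasi_mult_basis scale Lg n nmul V W I e"
    and "i \<in> I" and "j \<in> I"
    and "\<exists>js. (X = Unb js \<or> X = Bar js) \<and> length js = n - 1 \<and> set js \<subseteq> Jset I"
  shows "Some i \<in> mu scale n nmul V I e (Unb (Some j)) X \<longleftrightarrow>
         Some j \<in> mu scale n nmul V I e (Unb (Some i)) (flip_bar X)"
proof -
  have "vector_space scale" using assms(1)
    unfolding color_gLt_algebra_def graded_nary_algebra_def graded_vs_def by blast
  note b_sig_iff = mem_b_sig_iff[OF this assms(2)]
  have "Some i \<in> Jset I" "Some j \<in> Jset I" using assms(3,4) unfolding Jset_def by auto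
  moreover obtain js where "X = Unb js \<or> X = Bar js" using assms(5) by blast
  ultimately show ?thesis using b_sig_iff by auto
qed

end
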